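(* Let $G=(V,E,w)$ be a (simple) graph on $n$ vertices and let $z\in\{0,1\}^n$. Let $E_{\mathrm{sat}}=\{\{u,v\}\in E: z_u\neq z_v\}$ and $E_{\mathrm{unsat}}=E\setminus E_{\mathrm{sat}}$. For each qubit $j$ let $P(j)=X_j$ if $z_j=1$ and $P(j)=Y_j$ if $z_j=0$. For $\theta\in\mathbb{R}$ let \[ |\phi(\theta)\rangle=\exp\Big(\sum_{\{j,k\}\in E} i\theta P(j)P(k)\Big)|z\rangle. \] Write $d_j$ for the degree of vertex $j$. If $\{i,j\}\in E_{\mathrm{sat}}$ is contained in exactly $T$ triangles, then \[ \langle\phi(\theta)|2h_{ij}|\phi(\theta)\rangle=1+\sin(2\theta)\cos^{d_i-1}(2\theta)+\sin(2\theta)\cos^{d_j-1}(2\theta)+\frac{1+\cos^T(4\theta)}{2}\cos^{d_i+d_j-2-2T}(2\theta). \] If $\{i,j\}\in E_{\mathrm{unsat}}$ is contained in exactly $T$ triangles, then \[ \langle\phi(\theta)|2h_{ij}|\phi(\theta)\rangle=1-\cos^{d_i+d_j-2-2T}(2\theta). \]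
   Context: Qubits are placed on the vertices, $X_j,Y_j,Z_j$ are Pauli operators on qubit $j$, $|z\rangle$ is the computational basis state, and $h_{ij}=\frac12(I-X_iX_j-Y_iY_j-Z_iZ_j)$. An edge $\{i,j\}$ is contained in exactly $T$ triangles if there are exactly $T$ vertices $k$ with $\{i,k\}\in E$ and $\{j,k\}\in E$. *)

theory Defs
  imports Complex_Main
begin

text \<open>n-qubit states, one qubit per vertex of a finite vertex type 'v.
  A computational basis label is an assignment b :: 'v => bool (True = 1).\<close>

type_synonym 'v state = "('v \<Rightarrow> bool) \<Rightarrow> complex"
type_synonym 'v qop = "'v state \<Rightarrow> 'v state"

definition ket :: "('v \<Rightarrow> bool) \<Rightarrow> 'v state" where
  "ket z = (\<lambda>b. if b = z then 1 else 0)"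

definition flip :: "'v \<Rightarrow> ('v \<Rightarrow> bool) \<Rightarrow> ('v \<Rightarrow> bool)" where
  "flip j b = b(j := \<not> b j)"

text \<open>Pauli operators on qubit j: X|0>=|1>, X|1>=|0>; Y|0>=i|1>, Y|1>=-i|0>;
  Z|0>=|0>, Z|1>=-|1>.\<close>
definition pauliX :: "'v \<Rightarrow> 'v qop" where
  "pauliX j \<psi> = (\<lambda>b. \<psi> (flip j b))"

definition pauliY :: "'v \<Rightarrow> 'v qop" where
  "pauliY j \<psi> = (\<lambda>b. (if b j then \<i> else - \<i>) * \<psi> (flip j b))"

definition pauliZ :: "'v \<Rightarrow> 'v qop" where
  "pauliZ j \<psi> = (\<lambda>b. (if b j then -1 else 1) * \<psi> b)"

definition h_op :: "'v \<Rightarrow> 'v \<Rightarrow> 'v qop" where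
  "h_op i j \<psi> = (\<lambda>b. (\<psi> b - pauliX i (pauliX j \<psi>) b - pauliY i (pauliY j \<psi>) b
                        - pauliZ i (pauliZ j \<psi>) b) / 2)"

definition P_op :: "('v \<Rightarrow> bool) \<Rightarrow> 'v \<Rightarrow> 'v qop" where
  "P_op z j = (if z j then pauliX j else pauliY j)"

text \<open>For an edge e = {j,k}: the operator P(j)P(k) (the two factors commute,
  so the choice of order is immaterial).\<close>
definition edge_op :: "('v \<Rightarrow> bool) \<Rightarrow> 'v set \<Rightarrow> 'v qop" where
  "edge_op z e = (let (j, k) = (SOME (j, k). e = {j, k} \<and> j \<noteq> k) in P_op z j \<circ> P_op z k)"

definition gen_op :: "'v set set \<Rightarrow> ('v \<Rightarrow> bool) \<Rightarrow> real \<Rightarrow> 'v qop" where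
  "gen_op E z \<theta> \<psi> = (\<lambda>b. \<Sum>e\<in>E. \<i> * of_real \<theta> * edge_op z e \<psi> b)"

text \<open>Operator exponential applied to a state, via the (absolutely convergent)
  power series exp(A) psi = sum_k A^k psi / k!.\<close>
definition op_exp_apply :: "'v qop \<Rightarrow> 'v state \<Rightarrow> 'v state" where
  "op_exp_apply A \<psi> = (\<lambda>b. \<Sum>k. (A ^^ k) \<psi> b / of_nat (fact k))"

definition phi :: "'v set set \<Rightarrow> ('v \<Rightarrow> bool) \<Rightarrow> real \<Rightarrow> 'v state" where
  "phi E z \<theta> = op_exp_apply (gen_op E z \<theta>) (ket z)"

definition expval :: "'v state \<Rightarrow> 'v qop \<Rightarrow> complex" where
  "expval \<psi> A = (\<Sum>b\<in>UNIV. cnj (\<psi> b) * A \<psi> b)"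

definition degree :: "'v set set \<Rightarrow> 'v \<Rightarrow> nat" where
  "degree E j = card {k. {j, k} \<in> E}"

definition triangles :: "'v set set \<Rightarrow> 'v \<Rightarrow> 'v \<Rightarrow> nat" where
  "triangles E i j = card {k. {i, k} \<in> E \<and> {j, k} \<in> E}"

definition simple_graph :: "'v set set \<Rightarrow> bool" where
  "simple_graph E \<longleftrightarrow> (\<forall>e\<in>E. card e = 2)"

end

theory Submission
  imports Defs "HOL-Library.FuncSet" "HOL-Library.Cardinality"
begin

text \<open>
  The operators \<open>P(v)\<close> commute and have a common eigenbasis \<open>\<psi>\<^sub>T\<close>, indexed by spin
  configurations \<open>T\<close>, with \<open>P(v) \<psi>\<^sub>T = s\<^sub>v \<psi>\<^sub>T\<close> where \<open>s\<^sub>v = \<plusminus>1\<close> is the spin of \<open>T\<close> at \<open>v\<close>.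
  Hence the generator acts on \<open>\<psi>\<^sub>T\<close> as \<open>i\<theta>\<close> times the Ising energy
  \<open>\<lambda>\<^sub>T = \<Sum>\<^bsub>uv \<in> E\<^esub> s\<^sub>u s\<^sub>v\<close>, and since \<open>|z\<rangle>\<close> is the average of the \<open>\<psi>\<^sub>T\<close>,
  \<open>\<phi>(\<theta>) = 2\<^sup>-\<^sup>n \<Sum>\<^sub>T e\<^bsup>i\<theta>\<lambda>\<^sub>T\<^esup> \<psi>\<^sub>T\<close>.
  A single-qubit Pauli operator at \<open>v\<close> maps \<open>\<psi>\<^sub>T\<close> to a phase times \<open>\<psi>\<^sub>T\<close> or times the
  eigenvector with the spin at \<open>v\<close> flipped, and \<open>X\<^sub>iX\<^sub>j + Y\<^sub>iY\<^sub>j\<close> equals \<open>P\<^sub>iP\<^sub>j + Q\<^sub>iQ\<^sub>j\<close> or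
  \<open>P\<^sub>iQ\<^sub>j + Q\<^sub>iP\<^sub>j\<close>, where \<open>Q(v)\<close> is the one of \<open>X\<^sub>v, Y\<^sub>v\<close> that is not \<open>P(v)\<close>.
  By orthogonality, the expectation of such a product is \<open>2\<^sup>-\<^sup>n \<Sum>\<^sub>T e\<^bsup>i\<theta>(\<lambda>\<^sub>T - \<lambda>\<^bsub>T'\<^esub>)\<^esup> c(s\<^sub>i, s\<^sub>j)\<close>,
  \<open>T'\<close> being \<open>T\<close> with the flipped spins. Only edges at \<open>i\<close> or \<open>j\<close> contribute to
  \<open>\<lambda>\<^sub>T - \<lambda>\<^bsub>T'\<^esub>\<close>, so the sum over every other spin \<open>s\<^sub>k\<close> factorizes: it gives \<open>cos 2\<theta>\<close> if
  \<open>k\<close> is adjacent to exactly one flipped vertex, \<open>cos 4\<theta>\<close> or \<open>1\<close> if it is adjacent to two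
  (according as \<open>s\<^sub>i = s\<^sub>j\<close> or not), and \<open>1\<close> otherwise.
\<close>

section \<open>Spin signs and Walsh characters\<close>

definition bsign :: "bool \<Rightarrow> 'a::ring_1" where
  "bsign x = (if x then - 1 else 1)"

lemma bsign_simps [simp]: "bsign True = - 1" "bsign False = 1"
  by (simp_all add: bsign_def)

lemma bsign_xor: "bsign (x \<noteq> y) = bsign x * bsign y"
  by (simp add: bsign_def)

lemma of_real_bsign [simp]: "of_real (bsign x) = bsign x"
  by (simp add: bsign_def)

lemma cnj_bsign [simp]: "cnj (bsign x) = bsign x"
  by (simp add: bsign_def)

definition bxor :: "('v \<Rightarrow> bool) \<Rightarrow> ('v \<Rightarrow> bool) \<Rightarrow> 'v \<Rightarrow> bool" (infixl "\<oplus>" 65) where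
  "F \<oplus> G = (\<lambda>v. F v \<noteq> G v)"

lemma bxor_apply [simp]: "(F \<oplus> G) v = (F v \<noteq> G v)"
  by (simp add: bxor_def)

lemma bxor_False [simp]: "F \<oplus> (\<lambda>_. False) = F"
  by (simp add: bxor_def)

lemma bxor_eq_False_iff: "F \<oplus> G = (\<lambda>_. False) \<longleftrightarrow> F = G"
  by (auto simp: fun_eq_iff)

lemma sum_bxor_shift: "(\<Sum>b\<in>UNIV. g (z \<oplus> b)) = (\<Sum>b\<in>UNIV. g b)"
  by (rule sum.reindex_bij_witness[of _ "\<lambda>b. z \<oplus> b" "\<lambda>b. z \<oplus> b"]) (auto simp: fun_eq_iff)

lemma sum_prod_fun:
  fixes f :: "'v::finite \<Rightarrow> 'b::finite \<Rightarrow> 'c::comm_semiring_1"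
  shows "(\<Sum>T\<in>UNIV. \<Prod>v\<in>UNIV. f v (T v)) = (\<Prod>v\<in>UNIV. \<Sum>x\<in>UNIV. f v x)"
  by (subst prod_sum_PiE) auto

definition walsh :: "('v::finite \<Rightarrow> bool) \<Rightarrow> ('v \<Rightarrow> bool) \<Rightarrow> 'a::comm_ring_1" where
  "walsh S F = (\<Prod>v\<in>UNIV. bsign (S v \<and> F v))"

lemma walsh_commute: "walsh S F = walsh F S"
  unfolding walsh_def by (simp add: conj_commute)

lemma walsh_bxor_right: "walsh S (F \<oplus> G) = walsh S F * walsh S G"
  unfolding walsh_def prod.distrib[symmetric] by (rule prod.cong) (auto simp: bsign_def)

lemma walsh_bxor_left: "walsh (S \<oplus> S') F = walsh S F * walsh S' F"
  unfolding walsh_def prod.distrib[symmetric] by (rule prod.cong) (auto simp: bsign_def)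

lemma walsh_single: "walsh S (\<lambda>u. u = v) = bsign (S v)"
proof -
  have "walsh S (\<lambda>u. u = v) = (\<Prod>u\<in>UNIV. if u = v then bsign (S u) else 1)"
    unfolding walsh_def by (rule prod.cong) auto
  then show ?thesis by simp
qed

lemma cnj_walsh [simp]: "cnj (walsh S F) = walsh S F"
  by (simp add: walsh_def cnj_prod)

lemma sum_walsh: "(\<Sum>F\<in>UNIV. walsh S F) = (if S = (\<lambda>_. False) then 2 ^ CARD('v) else 0)"
  for S :: "'v::finite \<Rightarrow> bool"
proof -
  have "(\<Sum>F\<in>UNIV. walsh S F) = (\<Prod>v\<in>UNIV. \<Sum>x\<in>UNIV. bsign (S v \<and> x))"
    unfolding walsh_def by (rule sum_prod_fun)
  also have "\<dots> = (\<Prod>v\<in>UNIV. if S v then 0 else 2)"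
    by (rule prod.cong) (auto simp: UNIV_bool)
  also have "\<dots> = (if S = (\<lambda>_. False) then 2 ^ CARD('v) else 0)"
  proof (cases "S = (\<lambda>_. False)")
    case False
    then obtain v where "S v" by auto
    then show ?thesis by (auto intro!: prod_zero bexI[of _ v])
  qed simp
  finally show ?thesis .
qed

section \<open>A common eigenbasis of the operators \<open>P(v)\<close>\<close>

definition P_phase :: "('v \<Rightarrow> bool) \<Rightarrow> 'v \<Rightarrow> bool \<Rightarrow> complex" where
  "P_phase z v x = (if z v then 1 else if x then \<i> else - \<i>)"

lemma P_op_apply: "P_op z v \<psi> b = P_phase z v (b v) * \<psi> (flip v b)"
  by (simp add: P_op_def P_phase_def pauliX_def pauliY_def)

definition string_phase :: "('v::finite \<Rightarrow> bool) \<Rightarrow> ('v \<Rightarrow> bool) \<Rightarrow> complex" where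
  "string_phase z b = (\<Prod>v\<in>UNIV. if b v = z v then 1 else P_phase z v (b v))"

text \<open>\<open>eigvec z T\<close> is \<open>\<Sum>\<^sub>F (-1)\<^bsup>|T \<inter> F|\<^esup> P\<^sub>F |z\<rangle>\<close>, where \<open>P\<^sub>F\<close> is the product of the
  \<open>P(v)\<close> over \<open>v \<in> F\<close>; \<open>string_phase z b\<close> is the coefficient of \<open>P\<^bsub>z \<oplus> b\<^esub> |z\<rangle>\<close> at \<open>b\<close>.\<close>
definition eigvec :: "('v::finite \<Rightarrow> bool) \<Rightarrow> ('v \<Rightarrow> bool) \<Rightarrow> 'v state" where
  "eigvec z T b = walsh T (z \<oplus> b) * string_phase z b"

lemma cnj_string_phase_mult [simp]: "cnj (string_phase z b) * string_phase z b = 1"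
  unfolding string_phase_def cnj_prod prod.distrib[symmetric]
  by (rule prod.neutral) (auto simp: P_phase_def)

lemma string_phase_flip: "P_phase z v (b v) * string_phase z (flip v b) = string_phase z b"
proof -
  have "P_phase z v (b v) = (\<Prod>u\<in>UNIV. if u = v then P_phase z u (b u) else 1)"
    by simp
  also have "\<dots> * string_phase z (flip v b) = string_phase z b"
    unfolding string_phase_def prod.distrib[symmetric]
    by (rule prod.cong) (auto simp: flip_def P_phase_def)
  finally show ?thesis .
qed

lemma eigvec_orthogonal:
  "(\<Sum>b\<in>UNIV. cnj (eigvec z S b) * eigvec z T b) = (if S = T then 2 ^ CARD('v) else 0)"
  for z :: "'v::finite \<Rightarrow> bool"
proof -
  have "cnj (eigvec z S b) * eigvec z T b = walsh (S \<oplus> T) (z \<oplus> b)" for b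
  proof -
    have "cnj (eigvec z S b) * eigvec z T b
        = walsh S (z \<oplus> b) * walsh T (z \<oplus> b) * (cnj (string_phase z b) * string_phase z b)"
      unfolding eigvec_def by (simp only: complex_cnj_mult cnj_walsh mult_ac)
    then show ?thesis by (simp add: walsh_bxor_left)
  qed
  then have "(\<Sum>b\<in>UNIV. cnj (eigvec z S b) * eigvec z T b) = (\<Sum>b\<in>UNIV. walsh (S \<oplus> T) (z \<oplus> b))"
    by simp
  also have "\<dots> = (if S = T then 2 ^ CARD('v) else 0)"
    unfolding sum_bxor_shift[of "walsh (S \<oplus> T)"] sum_walsh bxor_eq_False_iff ..
  finally show ?thesis .
qed

lemma ket_eq_sum_eigvec:
  "ket z = (\<lambda>b. \<Sum>T\<in>UNIV. (1 / 2 ^ CARD('v)) * eigvec z T b)"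
  for z :: "'v::finite \<Rightarrow> bool"
proof
  fix b
  have "(\<Sum>T\<in>UNIV. eigvec z T b) = (\<Sum>T\<in>UNIV. walsh (z \<oplus> b) T) * string_phase z b"
    unfolding eigvec_def sum_distrib_right by (simp add: walsh_commute)
  also have "\<dots> = (if b = z then 2 ^ CARD('v) else 0)"
    by (auto simp: sum_walsh bxor_eq_False_iff string_phase_def)
  finally have "ket z b = (1 / 2 ^ CARD('v)) * (\<Sum>T\<in>UNIV. eigvec z T b)"
    by (simp add: ket_def)
  then show "ket z b = (\<Sum>T\<in>UNIV. (1 / 2 ^ CARD('v)) * eigvec z T b)"
    by (simp only: sum_distrib_left)
qed

section \<open>Linear operators and their action on the eigenbasis\<close>

definition qlinear :: "'v qop \<Rightarrow> bool" where
  "qlinear A \<longleftrightarrow> (\<forall>c \<psi> \<phi>. A (\<lambda>b. c * \<psi> b + \<phi> b) = (\<lambda>b. c * A \<psi> b + A \<phi> b))"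

lemma qlinear_zero:
  assumes "qlinear A"
  shows "A (\<lambda>_. 0) = (\<lambda>_. 0)"
proof
  fix b
  show "A (\<lambda>_. 0) b = 0"
    using fun_cong[OF assms[unfolded qlinear_def, rule_format, of 1 "\<lambda>_. 0" "\<lambda>_. 0"], of b]
    by simp
qed

lemma qlinear_scale:
  assumes "qlinear A"
  shows "A (\<lambda>b. c * \<psi> b) = (\<lambda>b. c * A \<psi> b)"
  using assms[unfolded qlinear_def, rule_format, of c \<psi> "\<lambda>_. 0"] qlinear_zero[OF assms]
  by simp

lemma qlinear_sum:
  assumes "qlinear A" and "finite S"
  shows "A (\<lambda>b. \<Sum>t\<in>S. c t * f t b) = (\<lambda>b. \<Sum>t\<in>S. c t * A (f t) b)"
  using assms(2)
proof (induction S)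
  case empty
  then show ?case using qlinear_zero[OF assms(1)] by simp
next
  case (insert t S)
  have "A (\<lambda>b. \<Sum>t\<in>insert t S. c t * f t b) = A (\<lambda>b. c t * f t b + (\<Sum>t\<in>S. c t * f t b))"
    using insert by simp
  also have "\<dots> = (\<lambda>b. c t * A (f t) b + A (\<lambda>b. \<Sum>t\<in>S. c t * f t b) b)"
    by (rule assms(1)[unfolded qlinear_def, rule_format])
  finally show ?case using insert by simp
qed

lemma qlinear_id: "qlinear (\<lambda>\<psi>. \<psi>)"
  by (simp add: qlinear_def)

lemma qlinear_comp: "qlinear A \<Longrightarrow> qlinear B \<Longrightarrow> qlinear (\<lambda>\<psi>. A (B \<psi>))"
  by (simp add: qlinear_def)

lemma qlinear_pauliX: "qlinear (pauliX v)"
  and qlinear_pauliY: "qlinear (pauliY v)"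
  and qlinear_pauliZ: "qlinear (pauliZ v)"
  by (simp_all add: qlinear_def pauliX_def pauliY_def pauliZ_def algebra_simps)

lemma qlinear_P_op: "qlinear (P_op z v)"
  by (simp add: P_op_def qlinear_pauliX qlinear_pauliY)

lemma qlinear_edge_op: "qlinear (edge_op z e)"
  unfolding edge_op_def Let_def
  by (cases "SOME (j, k). e = {j, k} \<and> j \<noteq> k") (simp add: comp_def qlinear_comp qlinear_P_op)

lemma qlinear_gen_op: "qlinear (gen_op E z \<theta>)"
  unfolding qlinear_def
proof (intro allI ext)
  fix c \<psi> \<phi> b
  have "edge_op z e (\<lambda>b. c * \<psi> b + \<phi> b) b = c * edge_op z e \<psi> b + edge_op z e \<phi> b" for e
    using fun_cong[OF qlinear_edge_op[unfolded qlinear_def, rule_format]] .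
  then show "gen_op E z \<theta> (\<lambda>b. c * \<psi> b + \<phi> b) b = c * gen_op E z \<theta> \<psi> b + gen_op E z \<theta> \<phi> b"
    by (simp add: gen_op_def sum.distrib sum_distrib_left algebra_simps)
qed

lemma op_exp_apply_eigen_sum:
  assumes "qlinear A" and "finite S" and eigen: "\<And>t. t \<in> S \<Longrightarrow> A (f t) = (\<lambda>b. \<mu> t * f t b)"
  shows "op_exp_apply A (\<lambda>b. \<Sum>t\<in>S. c t * f t b) = (\<lambda>b. \<Sum>t\<in>S. c t * exp (\<mu> t) * f t b)"
proof
  fix b
  have pow: "(A ^^ k) (\<lambda>b. \<Sum>t\<in>S. c t * f t b) = (\<lambda>b. \<Sum>t\<in>S. (c t * \<mu> t ^ k) * f t b)" for k
  proof (induction k)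
    case (Suc k)
    have "(A ^^ Suc k) (\<lambda>b. \<Sum>t\<in>S. c t * f t b) = (\<lambda>b. \<Sum>t\<in>S. (c t * \<mu> t ^ k) * A (f t) b)"
      using qlinear_sum[OF assms(1,2)] by (simp add: Suc.IH)
    also have "\<dots> = (\<lambda>b. \<Sum>t\<in>S. (c t * \<mu> t ^ Suc k) * f t b)"
      using eigen by (auto intro!: sum.cong simp: ac_simps)
    finally show ?case .
  qed simp
  have "(\<lambda>k. \<Sum>t\<in>S. c t * f t b * (\<mu> t ^ k / fact k)) sums (\<Sum>t\<in>S. c t * f t b * exp (\<mu> t))"
  proof (intro sums_sum sums_mult)
    fix t
    show "(\<lambda>k. \<mu> t ^ k / fact k) sums exp (\<mu> t)"
      using exp_converges[of "\<mu> t"] by (simp add: scaleR_conv_of_real divide_inverse mult.commute)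
  qed
  moreover have "(\<lambda>k. (A ^^ k) (\<lambda>b. \<Sum>t\<in>S. c t * f t b) b / fact k)
      = (\<lambda>k. \<Sum>t\<in>S. c t * f t b * (\<mu> t ^ k / fact k))"
    unfolding pow by (auto simp: sum_divide_distrib ac_simps)
  ultimately show "op_exp_apply A (\<lambda>b. \<Sum>t\<in>S. c t * f t b) b = (\<Sum>t\<in>S. c t * exp (\<mu> t) * f t b)"
    unfolding op_exp_apply_def by (simp add: sums_iff ac_simps)
qed

lemma P_op_eigvec: "P_op z v (eigvec z T) = (\<lambda>b. bsign (T v) * eigvec z T b)"
proof
  fix b
  have flip_walsh: "walsh T (z \<oplus> flip v b) = bsign (T v) * walsh T (z \<oplus> b)"
  proof -
    have "z \<oplus> flip v b = (z \<oplus> b) \<oplus> (\<lambda>u. u = v)"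
      by (auto simp: flip_def)
    then show ?thesis by (simp add: walsh_bxor_right walsh_single)
  qed
  then show "P_op z v (eigvec z T) b = bsign (T v) * eigvec z T b"
    unfolding P_op_apply eigvec_def string_phase_flip[of z v b, symmetric] flip_walsh
    by (simp only: mult_ac)
qed

lemma pauliZ_eigvec: "pauliZ v (eigvec z T) = (\<lambda>b. bsign (z v) * eigvec z (T \<oplus> (\<lambda>u. u = v)) b)"
proof
  fix b
  have "bsign (b v) = bsign (z v) * (bsign ((z \<oplus> b) v) :: complex)"
    by (simp add: bsign_def)
  then show "pauliZ v (eigvec z T) b = bsign (z v) * eigvec z (T \<oplus> (\<lambda>u. u = v)) b"
    by (simp add: pauliZ_def eigvec_def walsh_bxor_left walsh_commute[of "\<lambda>u. u = v"] walsh_single)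
       (simp add: bsign_def)
qed

definition Q_op :: "('v \<Rightarrow> bool) \<Rightarrow> 'v \<Rightarrow> 'v qop" where
  "Q_op z v = (if z v then pauliY v else pauliX v)"

lemma qlinear_Q_op: "qlinear (Q_op z v)"
  by (simp add: Q_op_def qlinear_pauliX qlinear_pauliY)

text \<open>This combines \<open>Y = iXZ\<close> and \<open>X = -iYZ\<close>.\<close>
lemma Q_op_eq_P_op_pauliZ: "Q_op z v \<psi> = (\<lambda>b. - \<i> * bsign (z v) * P_op z v (pauliZ v \<psi>) b)"
  by (auto simp: Q_op_def P_op_def pauliX_def pauliY_def pauliZ_def flip_def)

lemma Q_op_eigvec: "Q_op z v (eigvec z T) = (\<lambda>b. \<i> * bsign (T v) * eigvec z (T \<oplus> (\<lambda>u. u = v)) b)"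
  unfolding Q_op_eq_P_op_pauliZ pauliZ_eigvec qlinear_scale[OF qlinear_P_op] P_op_eigvec
  by (auto simp: bsign_def)

definition acts_at :: "('v::finite \<Rightarrow> bool) \<Rightarrow> 'v \<Rightarrow> 'v qop \<Rightarrow> bool \<Rightarrow> (bool \<Rightarrow> complex) \<Rightarrow> bool" where
  "acts_at z v A \<sigma> c \<longleftrightarrow> qlinear A \<and>
     (\<forall>T. A (eigvec z T) = (\<lambda>b. c (T v) * eigvec z (T \<oplus> (\<lambda>u. \<sigma> \<and> u = v)) b))"

lemma acts_at_id: "acts_at z v (\<lambda>\<psi>. \<psi>) False (\<lambda>_. 1)"
  by (simp add: acts_at_def qlinear_id)

lemma acts_at_P_op: "acts_at z v (P_op z v) False bsign"
  by (simp add: acts_at_def qlinear_P_op P_op_eigvec)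

lemma acts_at_Q_op: "acts_at z v (Q_op z v) True (\<lambda>x. \<i> * bsign x)"
  by (simp add: acts_at_def qlinear_Q_op Q_op_eigvec mult.assoc)

lemma acts_at_pauliZ: "acts_at z v (pauliZ v) True (\<lambda>_. bsign (z v))"
  by (simp add: acts_at_def qlinear_pauliZ pauliZ_eigvec)

lemma acts_at_comp_eigvec:
  assumes "i \<noteq> j" and A: "acts_at z i A \<sigma>i ci" and B: "acts_at z j B \<sigma>j cj"
  shows "A (B (eigvec z T))
    = (\<lambda>b. ci (T i) * cj (T j) * eigvec z (T \<oplus> (\<lambda>u. \<sigma>i \<and> u = i \<or> \<sigma>j \<and> u = j)) b)"
proof -
  have "T \<oplus> (\<lambda>u. \<sigma>j \<and> u = j) \<oplus> (\<lambda>u. \<sigma>i \<and> u = i) = T \<oplus> (\<lambda>u. \<sigma>i \<and> u = i \<or> \<sigma>j \<and> u = j)"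
    using \<open>i \<noteq> j\<close> by (auto simp: fun_eq_iff)
  then show ?thesis
    using A B \<open>i \<noteq> j\<close> by (simp add: acts_at_def qlinear_scale ac_simps)
qed

section \<open>The state \<open>\<phi>(\<theta>)\<close> in the eigenbasis\<close>

definition ising_energy :: "'v set set \<Rightarrow> ('v \<Rightarrow> bool) \<Rightarrow> real" where
  "ising_energy E T = (\<Sum>e\<in>E. \<Prod>v\<in>e. bsign (T v))"

lemma edge_op_eigvec:
  assumes "card e = 2"
  shows "edge_op z e (eigvec z T) = (\<lambda>b. (\<Prod>v\<in>e. bsign (T v)) * eigvec z T b)"
proof -
  have "\<exists>p. case p of (j, k) \<Rightarrow> e = {j, k} \<and> j \<noteq> k"
    using assms by (auto simp: card_2_iff)
  then have "case (SOME (j, k). e = {j, k} \<and> j \<noteq> k) of (j, k) \<Rightarrow> e = {j, k} \<and> j \<noteq> k"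
    by (rule someI_ex)
  then obtain j k where jk: "(SOME (j, k). e = {j, k} \<and> j \<noteq> k) = (j, k)" "e = {j, k}" "j \<noteq> k"
    by (auto split: prod.splits)
  then show ?thesis
    by (simp add: edge_op_def P_op_eigvec qlinear_scale[OF qlinear_P_op] ac_simps)
qed

lemma gen_op_eigvec:
  assumes "simple_graph E"
  shows "gen_op E z \<theta> (eigvec z T) = (\<lambda>b. (\<i> * of_real (\<theta> * ising_energy E T)) * eigvec z T b)"
proof
  fix b
  have "gen_op E z \<theta> (eigvec z T) b = (\<Sum>e\<in>E. \<i> * of_real \<theta> * (\<Prod>v\<in>e. bsign (T v)) * eigvec z T b)"
    unfolding gen_op_def
    using assms by (intro sum.cong) (auto simp: simple_graph_def edge_op_eigvec)
  then show "gen_op E z \<theta> (eigvec z T) b = (\<i> * of_real (\<theta> * ising_energy E T)) * eigvec z T b"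
    by (simp add: ising_energy_def sum_distrib_left sum_distrib_right ac_simps)
qed

lemma phi_eq_sum_eigvec:
  fixes z :: "'v::finite \<Rightarrow> bool"
  assumes "simple_graph E"
  shows "phi E z \<theta> = (\<lambda>b. \<Sum>T\<in>UNIV. (cis (\<theta> * ising_energy E T) / 2 ^ CARD('v)) * eigvec z T b)"
  unfolding phi_def ket_eq_sum_eigvec
  by (subst op_exp_apply_eigen_sum[OF qlinear_gen_op finite_class.finite_UNIV gen_op_eigvec[OF assms]])
     (simp_all add: cis_conv_exp)

lemma expval_eigvec_shift:
  fixes z :: "'v::finite \<Rightarrow> bool"
  assumes "qlinear A" and shift: "\<And>T. A (eigvec z T) = (\<lambda>b. C T * eigvec z (T \<oplus> \<tau>) b)"
  shows "expval (\<lambda>b. \<Sum>T\<in>UNIV. a T * eigvec z T b) A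
    = 2 ^ CARD('v) * (\<Sum>T\<in>UNIV. cnj (a (T \<oplus> \<tau>)) * a T * C T)"
proof -
  have "A (\<lambda>b. \<Sum>T\<in>UNIV. a T * eigvec z T b) = (\<lambda>b. \<Sum>T\<in>UNIV. a T * A (eigvec z T) b)"
    by (rule qlinear_sum[OF assms(1) finite_class.finite_UNIV])
  also have "\<dots> = (\<lambda>b. \<Sum>T\<in>UNIV. (a T * C T) * eigvec z (T \<oplus> \<tau>) b)"
    by (simp add: shift mult.assoc)
  finally have A_sum:
    "A (\<lambda>b. \<Sum>T\<in>UNIV. a T * eigvec z T b) = (\<lambda>b. \<Sum>T\<in>UNIV. (a T * C T) * eigvec z (T \<oplus> \<tau>) b)" .
  have "expval (\<lambda>b. \<Sum>T\<in>UNIV. a T * eigvec z T b) A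
      = (\<Sum>b\<in>UNIV. \<Sum>S\<in>UNIV. \<Sum>T\<in>UNIV.
           cnj (a S) * (a T * C T) * (cnj (eigvec z S b) * eigvec z (T \<oplus> \<tau>) b))"
    unfolding expval_def A_sum cnj_sum sum_product
    by (intro sum.cong refl) (simp add: mult_ac)
  also have "\<dots> = (\<Sum>S\<in>UNIV. \<Sum>T\<in>UNIV.
           cnj (a S) * (a T * C T) * (\<Sum>b\<in>UNIV. cnj (eigvec z S b) * eigvec z (T \<oplus> \<tau>) b))"
    by (subst sum.swap, rule sum.cong[OF refl], subst sum.swap) (simp add: sum_distrib_left)
  also have "\<dots> = (\<Sum>T\<in>UNIV. cnj (a (T \<oplus> \<tau>)) * (a T * C T) * 2 ^ CARD('v))"
    unfolding eigvec_orthogonal by (subst sum.swap) (simp add: if_distrib cong: if_cong)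
  finally show ?thesis
    by (simp add: sum_distrib_left mult_ac)
qed

lemma expval_phi_comp_spin_sum:
  fixes z :: "'v::finite \<Rightarrow> bool"
  assumes "simple_graph E" and "i \<noteq> j" and "acts_at z i A \<sigma>i ci" and "acts_at z j B \<sigma>j cj"
  defines "\<tau> \<equiv> \<lambda>u. \<sigma>i \<and> u = i \<or> \<sigma>j \<and> u = j"
  shows "expval (phi E z \<theta>) (\<lambda>\<psi>. A (B \<psi>)) = (\<Sum>T\<in>UNIV.
     cis (\<theta> * (ising_energy E T - ising_energy E (T \<oplus> \<tau>))) * ci (T i) * cj (T j)) / 2 ^ CARD('v)"
proof -
  define N :: complex where "N = 2 ^ CARD('v)"
  have "N \<noteq> 0" and "cnj N = N"
    by (simp_all add: N_def)
  then have weight: "N * (cnj (cis x / N) * (cis y / N) * c) = cis (y - x) * c / N" for x y c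
    by (simp add: cis_cnj cis_mult field_simps)
  have "expval (phi E z \<theta>) (\<lambda>\<psi>. A (B \<psi>)) = N * (\<Sum>T\<in>UNIV.
     cnj (cis (\<theta> * ising_energy E (T \<oplus> \<tau>)) / N) * (cis (\<theta> * ising_energy E T) / N)
     * (ci (T i) * cj (T j)))"
    unfolding phi_eq_sum_eigvec[OF assms(1)] N_def
    using assms(3,4) acts_at_comp_eigvec[OF assms(2-4)]
    by (intro expval_eigvec_shift) (auto simp: acts_at_def qlinear_comp \<tau>_def)
  then show ?thesis
    unfolding sum_distrib_left weight N_def[symmetric] sum_divide_distrib
    by (simp add: right_diff_distrib mult.assoc)
qed

section \<open>Summing out the spins away from an edge\<close>

lemma prod_UNIV_pair:
  fixes g :: "'v::finite \<Rightarrow> 'a::comm_monoid_mult"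
  assumes "i \<noteq> j"
  shows "(\<Prod>v\<in>UNIV. g v) = g i * g j * (\<Prod>k\<in>-{i, j}. g k)"
proof -
  have "- {i, j} = UNIV - {i} - {j}"
    by auto
  then show ?thesis
    using assms by (simp add: prod.remove[of UNIV i] prod.remove[of "UNIV - {i}" j] mult.assoc)
qed

lemma sum_fun_pinned_pair:
  fixes i j :: "'v::finite" and F :: "bool \<Rightarrow> bool \<Rightarrow> 'a::comm_semiring_1"
    and G :: "bool \<Rightarrow> bool \<Rightarrow> 'v \<Rightarrow> bool \<Rightarrow> 'a"
  assumes "i \<noteq> j"
  shows "(\<Sum>T\<in>UNIV. F (T i) (T j) * (\<Prod>k\<in>-{i, j}. G (T i) (T j) k (T k)))
       = (\<Sum>a\<in>UNIV. \<Sum>b\<in>UNIV. F a b * (\<Prod>k\<in>-{i, j}. \<Sum>x\<in>UNIV. G a b k x))"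
proof -
  have pinned: "(\<Sum>T\<in>UNIV. if T i = a \<and> T j = b then \<Prod>k\<in>-{i, j}. G a b k (T k) else 0)
      = (\<Prod>k\<in>-{i, j}. \<Sum>x\<in>UNIV. G a b k x)" for a b
  proof -
    define h where "h v x = (if v = i then of_bool (x = a) else if v = j then of_bool (x = b) else G a b v x)"
      for v x
    have h_rest: "(\<Prod>k\<in>-{i, j}. h k (T k)) = (\<Prod>k\<in>-{i, j}. G a b k (T k))"
      "(\<Prod>k\<in>-{i, j}. \<Sum>x\<in>UNIV. h k x) = (\<Prod>k\<in>-{i, j}. \<Sum>x\<in>UNIV. G a b k x)" for T
      by (auto simp: h_def intro!: prod.cong sum.cong)
    have "(\<Sum>T\<in>UNIV. if T i = a \<and> T j = b then \<Prod>k\<in>-{i, j}. G a b k (T k) else 0)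
        = (\<Sum>T\<in>UNIV. \<Prod>v\<in>UNIV. h v (T v))"
      unfolding prod_UNIV_pair[OF assms] h_rest using assms by (auto simp: h_def intro!: sum.cong)
    also have "\<dots> = (\<Prod>v\<in>UNIV. \<Sum>x\<in>UNIV. h v x)"
      by (rule sum_prod_fun)
    also have "\<dots> = (\<Prod>k\<in>-{i, j}. \<Sum>x\<in>UNIV. G a b k x)"
      unfolding prod_UNIV_pair[OF assms] h_rest using assms by (simp add: h_def UNIV_bool)
    finally show ?thesis .
  qed
  have "(\<Sum>T\<in>UNIV. F (T i) (T j) * (\<Prod>k\<in>-{i, j}. G (T i) (T j) k (T k)))
      = (\<Sum>T\<in>UNIV. \<Sum>a\<in>UNIV. \<Sum>b\<in>UNIV. F a b *
           (if T i = a \<and> T j = b then \<Prod>k\<in>-{i, j}. G a b k (T k) else 0))"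
    by (intro sum.cong refl) (simp add: UNIV_bool)
  also have "\<dots> = (\<Sum>a\<in>UNIV. \<Sum>b\<in>UNIV. F a b *
           (\<Sum>T\<in>UNIV. if T i = a \<and> T j = b then \<Prod>k\<in>-{i, j}. G a b k (T k) else 0))"
    by (subst sum.swap, rule sum.cong[OF refl], subst sum.swap) (simp add: sum_distrib_left)
  finally show ?thesis
    unfolding pinned .
qed

lemma simple_graph_edge_card: "simple_graph E \<Longrightarrow> e \<in> E \<Longrightarrow> card e = 2"
  by (simp add: simple_graph_def)

lemma simple_graph_edge_neq: "simple_graph E \<Longrightarrow> {i, j} \<in> E \<Longrightarrow> i \<noteq> j"
  using simple_graph_edge_card[of E "{i, j}"] by (cases "i = j") auto

lemma sum_edges_at_pair:
  fixes E :: "'v::finite set set"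
  assumes "simple_graph E" and "{i, j} \<in> E"
    and avoid: "\<And>e. e \<in> E \<Longrightarrow> i \<notin> e \<Longrightarrow> j \<notin> e \<Longrightarrow> g e = 0"
  shows "(\<Sum>e\<in>E. g e) = g {i, j} + (\<Sum>k\<in>-{i, j}.
           (if {i, k} \<in> E then g {i, k} else 0) + (if {j, k} \<in> E then g {j, k} else 0))"
proof -
  have ij: "i \<noteq> j"
    using assms(1,2) by (rule simple_graph_edge_neq)
  define Ki where "Ki = {k \<in> -{i, j}. {i, k} \<in> E}"
  define Kj where "Kj = {k \<in> -{i, j}. {j, k} \<in> E}"
  define E' where "E' = insert {i, j} ((\<lambda>k. {i, k}) ` Ki \<union> (\<lambda>k. {j, k}) ` Kj)"
  have "E' \<subseteq> E"
    using assms(2) by (auto simp: E'_def Ki_def Kj_def)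
  moreover have "g e = 0" if e: "e \<in> E - E'" for e
  proof (cases "i \<in> e \<or> j \<in> e")
    case True
    have "card e = 2"
      using simple_graph_edge_card[OF assms(1)] e by blast
    then obtain x y where "e = {x, y}" "x \<noteq> y"
      by (meson card_2_iff)
    with True e ij show ?thesis
      by (auto simp: E'_def Ki_def Kj_def insert_commute doubleton_eq_iff)
  qed (use avoid e in auto)
  ultimately have "(\<Sum>e\<in>E. g e) = (\<Sum>e\<in>E'. g e)"
    by (intro sum.mono_neutral_right) auto
  also have "\<dots> = g {i, j} + ((\<Sum>e\<in>(\<lambda>k. {i, k}) ` Ki. g e) + (\<Sum>e\<in>(\<lambda>k. {j, k}) ` Kj. g e))"
  proof -
    have "{i, j} \<notin> (\<lambda>k. {i, k}) ` Ki \<union> (\<lambda>k. {j, k}) ` Kj"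
      and "(\<lambda>k. {i, k}) ` Ki \<inter> (\<lambda>k. {j, k}) ` Kj = {}"
      using ij by (auto simp: Ki_def Kj_def doubleton_eq_iff)
    then show ?thesis
      unfolding E'_def by (simp add: sum.union_disjoint)
  qed
  also have "(\<Sum>e\<in>(\<lambda>k. {i, k}) ` Ki. g e) = (\<Sum>k\<in>Ki. g {i, k})"
    by (rule sum.reindex_cong[where l="\<lambda>k. {i, k}"]) (auto simp: inj_on_def doubleton_eq_iff)
  also have "(\<Sum>e\<in>(\<lambda>k. {j, k}) ` Kj. g e) = (\<Sum>k\<in>Kj. g {j, k})"
    by (rule sum.reindex_cong[where l="\<lambda>k. {j, k}"]) (auto simp: inj_on_def doubleton_eq_iff)
  also have "(\<Sum>k\<in>Ki. g {i, k}) = (\<Sum>k\<in>-{i, j}. if {i, k} \<in> E then g {i, k} else 0)"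
    unfolding Ki_def by (rule sum.inter_filter) simp
  also have "(\<Sum>k\<in>Kj. g {j, k}) = (\<Sum>k\<in>-{i, j}. if {j, k} \<in> E then g {j, k} else 0)"
    unfolding Kj_def by (rule sum.inter_filter) simp
  finally show ?thesis
    by (simp add: sum.distrib)
qed

lemma ising_energy_flip_diff:
  fixes E :: "'v::finite set set" and \<sigma>i \<sigma>j :: bool
  assumes "simple_graph E" and "{i, j} \<in> E"
  defines "\<tau> \<equiv> \<lambda>u. \<sigma>i \<and> u = i \<or> \<sigma>j \<and> u = j"
  shows "ising_energy E T - ising_energy E (T \<oplus> \<tau>)
    = bsign (T i) * bsign (T j) * (1 - bsign \<sigma>i * bsign \<sigma>j)
      + (\<Sum>k\<in>-{i, j}. bsign (T k) * ((if {i, k} \<in> E then bsign (T i) * (1 - bsign \<sigma>i) else 0)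
                                     + (if {j, k} \<in> E then bsign (T j) * (1 - bsign \<sigma>j) else 0)))"
proof -
  have ij: "i \<noteq> j"
    using assms(1,2) by (rule simple_graph_edge_neq)
  define g :: "'v set \<Rightarrow> real" where "g e = (\<Prod>v\<in>e. bsign (T v)) * (1 - (\<Prod>v\<in>e. bsign (\<tau> v)))" for e
  have "ising_energy E T - ising_energy E (T \<oplus> \<tau>) = (\<Sum>e\<in>E. g e)"
    unfolding ising_energy_def g_def sum_subtractf[symmetric]
    by (intro sum.cong refl) (simp only: bxor_apply bsign_xor prod.distrib right_diff_distrib mult_1_right)
  also have "\<dots> = g {i, j} + (\<Sum>k\<in>-{i, j}.
           (if {i, k} \<in> E then g {i, k} else 0) + (if {j, k} \<in> E then g {j, k} else 0))"
  proof (rule sum_edges_at_pair[OF assms(1,2)])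
    fix e assume "i \<notin> e" "j \<notin> e"
    then have "(\<Prod>v\<in>e. bsign (\<tau> v)) = (1::real)"
      by (intro prod.neutral) (auto simp: \<tau>_def bsign_def)
    then show "g e = 0"
      by (simp add: g_def)
  qed
  also have "\<dots> = bsign (T i) * bsign (T j) * (1 - bsign \<sigma>i * bsign \<sigma>j)
      + (\<Sum>k\<in>-{i, j}. bsign (T k) * ((if {i, k} \<in> E then bsign (T i) * (1 - bsign \<sigma>i) else 0)
                                     + (if {j, k} \<in> E then bsign (T j) * (1 - bsign \<sigma>j) else 0)))"
  proof (intro arg_cong2[where f = "(+)"] sum.cong refl)
    show "g {i, j} = bsign (T i) * bsign (T j) * (1 - bsign \<sigma>i * bsign \<sigma>j)"
      using ij by (simp add: g_def \<tau>_def)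
    fix k assume "k \<in> -{i, j}"
    then show "(if {i, k} \<in> E then g {i, k} else 0) + (if {j, k} \<in> E then g {j, k} else 0)
      = bsign (T k) * ((if {i, k} \<in> E then bsign (T i) * (1 - bsign \<sigma>i) else 0)
                    + (if {j, k} \<in> E then bsign (T j) * (1 - bsign \<sigma>j) else 0))"
      using ij by (auto simp: g_def \<tau>_def distrib_left mult_ac)
  qed
  finally show ?thesis .
qed

lemma cis_sum: "finite A \<Longrightarrow> cis (\<Sum>x\<in>A. f x) = (\<Prod>x\<in>A. cis (f x))"
  by (induction rule: finite_induct) (simp_all add: cis_mult[symmetric])

lemma sum_cis_bsign: "(\<Sum>x\<in>UNIV. cis (bsign x * u)) = of_real (2 * cos u)"
  by (simp add: UNIV_bool complex_eq_iff)

lemma prod_bool_classes: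
  fixes f :: "bool \<Rightarrow> bool \<Rightarrow> 'a::comm_monoid_mult"
  assumes "finite W"
  shows "(\<Prod>k\<in>W. f (P k) (Q k))
    = f True True ^ card {k \<in> W. P k \<and> Q k} * f True False ^ card {k \<in> W. P k \<and> \<not> Q k}
      * f False True ^ card {k \<in> W. \<not> P k \<and> Q k} * f False False ^ card {k \<in> W. \<not> P k \<and> \<not> Q k}"
proof -
  have "(\<Prod>k\<in>W. f (P k) (Q k))
      = (\<Prod>k\<in>W. (if P k \<and> Q k then f True True else 1) * (if P k \<and> \<not> Q k then f True False else 1)
           * (if \<not> P k \<and> Q k then f False True else 1) * (if \<not> P k \<and> \<not> Q k then f False False else 1))"
    by (rule prod.cong) auto
  then show ?thesis
    using assms by (simp add: prod.distrib prod.inter_filter[symmetric])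
qed

definition exclusive_degree :: "'v set set \<Rightarrow> 'v \<Rightarrow> 'v \<Rightarrow> nat" where
  "exclusive_degree E i j = card {k \<in> - {i, j}. {i, k} \<in> E \<and> {j, k} \<notin> E}"

lemma simple_graph_singleton_notin: "simple_graph E \<Longrightarrow> {v} \<notin> E"
  using simple_graph_edge_card by fastforce

lemma triangles_commute: "triangles E i j = triangles E j i"
  by (simp add: triangles_def conj_commute)

lemma triangles_eq_card:
  assumes "simple_graph E"
  shows "triangles E i j = card {k \<in> - {i, j}. {i, k} \<in> E \<and> {j, k} \<in> E}"
proof -
  have "{k. {i, k} \<in> E \<and> {j, k} \<in> E} = {k \<in> - {i, j}. {i, k} \<in> E \<and> {j, k} \<in> E}"
    using simple_graph_singleton_notin[OF assms] by auto
  then show ?thesis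
    by (simp add: triangles_def)
qed

lemma degree_eq_Suc_triangles:
  fixes E :: "'v::finite set set"
  assumes "simple_graph E" and "{i, j} \<in> E"
  shows "degree E i = Suc (triangles E i j + exclusive_degree E i j)"
proof -
  define C where "C = {k \<in> - {i, j}. {i, k} \<in> E \<and> {j, k} \<in> E}"
  define X where "X = {k \<in> - {i, j}. {i, k} \<in> E \<and> {j, k} \<notin> E}"
  have "{k. {i, k} \<in> E} = insert j (C \<union> X)"
  proof (intro set_eqI iffI)
    fix k assume "k \<in> {k. {i, k} \<in> E}"
    moreover from this have "k \<noteq> i"
      using simple_graph_singleton_notin[OF assms(1)] by auto
    ultimately show "k \<in> insert j (C \<union> X)"
      by (auto simp: C_def X_def)
  qed (use assms(2) in \<open>auto simp: C_def X_def\<close>)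
  then have "degree E i = card (insert j (C \<union> X))"
    by (simp add: degree_def)
  also have "\<dots> = Suc (card C + card X)"
    by (subst card_insert_disjoint) (auto simp: C_def X_def intro!: card_Un_disjoint)
  finally show ?thesis
    by (simp add: triangles_eq_card[OF assms(1)] exclusive_degree_def C_def X_def)
qed

lemma prod_cos_neighbours:
  fixes E :: "'v::finite set set"
  assumes "simple_graph E"
  shows "(\<Prod>k\<in>-{i, j}. cos (\<theta> * ((if {i, k} \<in> E then x else 0) + (if {j, k} \<in> E then y else 0))))
    = cos (\<theta> * (x + y)) ^ triangles E i j * cos (\<theta> * x) ^ exclusive_degree E i j
      * cos (\<theta> * y) ^ exclusive_degree E j i"
proof -
  let ?f = "\<lambda>p q. cos (\<theta> * ((if p then x else 0) + (if q then y else 0)))"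
  have "(\<Prod>k\<in>-{i, j}. ?f ({i, k} \<in> E) ({j, k} \<in> E))
      = ?f True True ^ card {k \<in> -{i, j}. {i, k} \<in> E \<and> {j, k} \<in> E}
        * ?f True False ^ card {k \<in> -{i, j}. {i, k} \<in> E \<and> {j, k} \<notin> E}
        * ?f False True ^ card {k \<in> -{i, j}. {i, k} \<notin> E \<and> {j, k} \<in> E}
        * ?f False False ^ card {k \<in> -{i, j}. {i, k} \<notin> E \<and> {j, k} \<notin> E}"
    by (rule prod_bool_classes) simp
  also have "{k \<in> -{i, j}. {i, k} \<notin> E \<and> {j, k} \<in> E} = {k \<in> -{j, i}. {j, k} \<in> E \<and> {i, k} \<notin> E}"
    by auto
  finally show ?thesis
    by (simp add: triangles_eq_card[OF assms] exclusive_degree_def)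
qed

lemma sum_cis_energy_flip:
  fixes E :: "'v::finite set set" and \<sigma>i \<sigma>j :: bool and F :: "bool \<Rightarrow> bool \<Rightarrow> complex"
  assumes "simple_graph E" and "{i, j} \<in> E"
  defines "\<tau> \<equiv> \<lambda>u. \<sigma>i \<and> u = i \<or> \<sigma>j \<and> u = j"
    and "wi \<equiv> 1 - bsign \<sigma>i" and "wj \<equiv> 1 - bsign \<sigma>j"
  shows "(\<Sum>T\<in>UNIV. cis (\<theta> * (ising_energy E T - ising_energy E (T \<oplus> \<tau>))) * F (T i) (T j))
    = 2 ^ (CARD('v) - 2) * (\<Sum>a\<in>UNIV. \<Sum>b\<in>UNIV. F a b
        * cis (\<theta> * bsign a * bsign b * (1 - bsign \<sigma>i * bsign \<sigma>j))
        * of_real (cos (\<theta> * (bsign a * wi + bsign b * wj)) ^ triangles E i j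
                   * cos (\<theta> * wi) ^ exclusive_degree E i j * cos (\<theta> * wj) ^ exclusive_degree E j i))"
proof -
  have ij: "i \<noteq> j"
    using assms(1,2) by (rule simple_graph_edge_neq)
  define u where
    "u a b k = (if {i, k} \<in> E then bsign a * wi else 0) + (if {j, k} \<in> E then bsign b * wj else 0)" for a b k
  have prod_cos: "(\<Prod>k\<in>-{i, j}. 2 * cos (\<theta> * u a b k))
      = 2 ^ (CARD('v) - 2) * (cos (\<theta> * (bsign a * wi + bsign b * wj)) ^ triangles E i j
          * cos (\<theta> * wi) ^ exclusive_degree E i j * cos (\<theta> * wj) ^ exclusive_degree E j i)" for a b
  proof -
    have "card (- {i, j} :: 'v set) = CARD('v) - 2"
      using ij by (simp add: Compl_eq_Diff_UNIV card_Diff_subset)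
    moreover have "cos (\<theta> * (bsign x * w)) = cos (\<theta> * w)" for x and w :: real
      by (cases x) simp_all
    ultimately show ?thesis
      by (simp add: prod.distrib u_def prod_cos_neighbours[OF assms(1)])
  qed
  have "\<theta> * (ising_energy E T - ising_energy E (T \<oplus> \<tau>))
      = \<theta> * bsign (T i) * bsign (T j) * (1 - bsign \<sigma>i * bsign \<sigma>j)
        + (\<Sum>k\<in>-{i, j}. bsign (T k) * (\<theta> * u (T i) (T j) k))" for T
    unfolding ising_energy_flip_diff[OF assms(1,2), where \<sigma>i = \<sigma>i and \<sigma>j = \<sigma>j, folded \<tau>_def]
      u_def wi_def wj_def
    by (simp add: sum_distrib_left algebra_simps)
  then have "(\<Sum>T\<in>UNIV. cis (\<theta> * (ising_energy E T - ising_energy E (T \<oplus> \<tau>))) * F (T i) (T j))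
      = (\<Sum>T\<in>UNIV. (F (T i) (T j) * cis (\<theta> * bsign (T i) * bsign (T j) * (1 - bsign \<sigma>i * bsign \<sigma>j)))
           * (\<Prod>k\<in>-{i, j}. cis (bsign (T k) * (\<theta> * u (T i) (T j) k))))"
    by (simp add: cis_mult[symmetric] cis_sum mult_ac)
  also have "\<dots> = (\<Sum>a\<in>UNIV. \<Sum>b\<in>UNIV. (F a b * cis (\<theta> * bsign a * bsign b * (1 - bsign \<sigma>i * bsign \<sigma>j)))
           * of_real (\<Prod>k\<in>-{i, j}. 2 * cos (\<theta> * u a b k)))"
    using sum_fun_pinned_pair[OF ij,
        of "\<lambda>a b. F a b * cis (\<theta> * bsign a * bsign b * (1 - bsign \<sigma>i * bsign \<sigma>j))"
           "\<lambda>a b k x. cis (bsign x * (\<theta> * u a b k))"]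
    by (simp only: sum_cis_bsign of_real_prod)
  also have "\<dots> = 2 ^ (CARD('v) - 2) * (\<Sum>a\<in>UNIV. \<Sum>b\<in>UNIV. F a b
        * cis (\<theta> * bsign a * bsign b * (1 - bsign \<sigma>i * bsign \<sigma>j))
        * of_real (cos (\<theta> * (bsign a * wi + bsign b * wj)) ^ triangles E i j
                   * cos (\<theta> * wi) ^ exclusive_degree E i j * cos (\<theta> * wj) ^ exclusive_degree E j i))"
    unfolding prod_cos by (simp add: sum_distrib_left mult_ac)
  finally show ?thesis .
qed

section \<open>Expectation values of the terms of \<open>h\<^sub>i\<^sub>j\<close>\<close>

lemma expval_phi_comp:
  fixes z :: "'v::finite \<Rightarrow> bool"
  assumes "simple_graph E" and "{i, j} \<in> E" and "acts_at z i A \<sigma>i ci" and "acts_at z j B \<sigma>j cj"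
  defines "wi \<equiv> 1 - bsign \<sigma>i" and "wj \<equiv> 1 - bsign \<sigma>j"
  shows "expval (phi E z \<theta>) (\<lambda>\<psi>. A (B \<psi>)) = (\<Sum>a\<in>UNIV. \<Sum>b\<in>UNIV. ci a * cj b
        * cis (\<theta> * bsign a * bsign b * (1 - bsign \<sigma>i * bsign \<sigma>j))
        * of_real (cos (\<theta> * (bsign a * wi + bsign b * wj)) ^ triangles E i j
                   * cos (\<theta> * wi) ^ exclusive_degree E i j * cos (\<theta> * wj) ^ exclusive_degree E j i)) / 4"
proof -
  have ij: "i \<noteq> j"
    using assms(1,2) by (rule simple_graph_edge_neq)
  have "2 \<le> CARD('v)"
    using ij card_mono[of UNIV "{i, j}"] by simp
  then obtain m where "CARD('v) = m + 2"
    by (metis add.commute le_iff_add)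
  then have N: "(2::complex) ^ CARD('v) = 4 * 2 ^ (CARD('v) - 2)"
    by (simp add: power_add)
  show ?thesis
    unfolding expval_phi_comp_spin_sum[OF assms(1) ij assms(3,4)] mult.assoc
      sum_cis_energy_flip[OF assms(1,2), where F = "\<lambda>a b. ci a * cj b"] N wi_def wj_def
    by (simp add: mult_ac)
qed

lemma expval_phi_identity:
  fixes E :: "'v::finite set set"
  assumes "simple_graph E" and "{i, j} \<in> E"
  shows "expval (phi E z \<theta>) (\<lambda>\<psi>. \<psi>) = 1"
  using expval_phi_comp[OF assms acts_at_id acts_at_id] by (simp add: UNIV_bool)

lemma expval_phi_P_P:
  fixes E :: "'v::finite set set"
  assumes "simple_graph E" and "{i, j} \<in> E"
  shows "expval (phi E z \<theta>) (\<lambda>\<psi>. P_op z i (P_op z j \<psi>)) = 0"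
  using expval_phi_comp[OF assms acts_at_P_op acts_at_P_op] by (simp add: UNIV_bool)

lemma expval_phi_Q_Q:
  fixes E :: "'v::finite set set"
  assumes "simple_graph E" and "{i, j} \<in> E"
  shows "expval (phi E z \<theta>) (\<lambda>\<psi>. Q_op z i (Q_op z j \<psi>))
    = complex_of_real ((1 - cos (4 * \<theta>) ^ triangles E i j) / 2
                       * cos (2 * \<theta>) ^ (exclusive_degree E i j + exclusive_degree E j i))"
  by (subst expval_phi_comp[OF assms acts_at_Q_op acts_at_Q_op]) (simp add: UNIV_bool power_add field_simps)

lemma expval_phi_P_Q:
  fixes E :: "'v::finite set set"
  assumes "simple_graph E" and "{i, j} \<in> E"
  shows "expval (phi E z \<theta>) (\<lambda>\<psi>. P_op z i (Q_op z j \<psi>))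
    = complex_of_real (- sin (2 * \<theta>) * cos (2 * \<theta>) ^ (triangles E i j + exclusive_degree E j i))"
  by (subst expval_phi_comp[OF assms acts_at_P_op acts_at_Q_op]) (simp add: UNIV_bool power_add field_simps complex_eq_iff)

lemma expval_phi_Z_Z:
  fixes E :: "'v::finite set set"
  assumes "simple_graph E" and "{i, j} \<in> E"
  shows "expval (phi E z \<theta>) (\<lambda>\<psi>. pauliZ i (pauliZ j \<psi>))
    = complex_of_real (bsign (z i) * bsign (z j) * (1 + cos (4 * \<theta>) ^ triangles E i j) / 2
                       * cos (2 * \<theta>) ^ (exclusive_degree E i j + exclusive_degree E j i))"
  by (subst expval_phi_comp[OF assms acts_at_pauliZ acts_at_pauliZ]) (simp add: UNIV_bool power_add field_simps)

lemma expval_phi_Q_P: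
  fixes E :: "'v::finite set set"
  assumes "simple_graph E" and "{i, j} \<in> E"
  shows "expval (phi E z \<theta>) (\<lambda>\<psi>. Q_op z i (P_op z j \<psi>))
    = complex_of_real (- sin (2 * \<theta>) * cos (2 * \<theta>) ^ (triangles E i j + exclusive_degree E i j))"
  by (subst expval_phi_comp[OF assms acts_at_Q_op acts_at_P_op]) (simp add: UNIV_bool power_add field_simps complex_eq_iff)

lemma expval_two_h_op:
  "expval \<psi> (\<lambda>\<phi> b. 2 * h_op i j \<phi> b) = expval \<psi> (\<lambda>\<phi>. \<phi>)
     - expval \<psi> (\<lambda>\<phi>. pauliX i (pauliX j \<phi>)) - expval \<psi> (\<lambda>\<phi>. pauliY i (pauliY j \<phi>))
     - expval \<psi> (\<lambda>\<phi>. pauliZ i (pauliZ j \<phi>))"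
  unfolding expval_def h_op_def sum_subtractf[symmetric] by (intro sum.cong refl) (simp add: field_simps)

lemma expval_pauliXX_add_pauliYY:
  "expval \<psi> (\<lambda>\<phi>. pauliX i (pauliX j \<phi>)) + expval \<psi> (\<lambda>\<phi>. pauliY i (pauliY j \<phi>))
   = (if z i = z j
      then expval \<psi> (\<lambda>\<phi>. P_op z i (P_op z j \<phi>)) + expval \<psi> (\<lambda>\<phi>. Q_op z i (Q_op z j \<phi>))
      else expval \<psi> (\<lambda>\<phi>. P_op z i (Q_op z j \<phi>)) + expval \<psi> (\<lambda>\<phi>. Q_op z i (P_op z j \<phi>)))"
  by (cases "z i"; cases "z j") (simp_all add: P_op_def Q_op_def add.commute)

lemma expval_phi_two_h_op:
  fixes E :: "'v::finite set set"
  assumes "simple_graph E" and "{i, j} \<in> E"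
  shows "expval (phi E z \<theta>) (\<lambda>\<psi> b. 2 * h_op i j \<psi> b)
    = 1 - (if z i = z j
           then complex_of_real ((1 - cos (4 * \<theta>) ^ triangles E i j) / 2
                  * cos (2 * \<theta>) ^ (exclusive_degree E i j + exclusive_degree E j i))
           else complex_of_real (- sin (2 * \<theta>) * cos (2 * \<theta>) ^ (triangles E i j + exclusive_degree E j i)
                  - sin (2 * \<theta>) * cos (2 * \<theta>) ^ (triangles E i j + exclusive_degree E i j)))
      - complex_of_real (bsign (z i) * bsign (z j) * (1 + cos (4 * \<theta>) ^ triangles E i j) / 2
                  * cos (2 * \<theta>) ^ (exclusive_degree E i j + exclusive_degree E j i))"
proof -
  have "expval (phi E z \<theta>) (\<lambda>\<psi> b. 2 * h_op i j \<psi> b)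
      = expval (phi E z \<theta>) (\<lambda>\<psi>. \<psi>)
        - (expval (phi E z \<theta>) (\<lambda>\<psi>. pauliX i (pauliX j \<psi>))
           + expval (phi E z \<theta>) (\<lambda>\<psi>. pauliY i (pauliY j \<psi>)))
        - expval (phi E z \<theta>) (\<lambda>\<psi>. pauliZ i (pauliZ j \<psi>))"
    by (simp add: expval_two_h_op)
  then show ?thesis
    unfolding expval_pauliXX_add_pauliYY[of _ i j z] using assms
    by (simp add: expval_phi_identity expval_phi_P_P expval_phi_Q_Q expval_phi_P_Q expval_phi_Q_P
        expval_phi_Z_Z)
qed

theorem lemma3:
  fixes E :: "('v::finite) set set" and z :: "'v \<Rightarrow> bool" and \<theta> :: real
    and i j :: 'v and T :: nat
  assumes "simple_graph E"
    and "{i, j} \<in> E"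
    and "triangles E i j = T"
  shows "(z i \<noteq> z j \<longrightarrow>
           expval (phi E z \<theta>) (\<lambda>\<psi> b. 2 * h_op i j \<psi> b)
           = complex_of_real (1 + sin (2*\<theta>) * cos (2*\<theta>) ^ (degree E i - 1)
               + sin (2*\<theta>) * cos (2*\<theta>) ^ (degree E j - 1)
               + (1 + cos (4*\<theta>) ^ T) / 2
                 * cos (2*\<theta>) ^ (degree E i + degree E j - 2 - 2*T)))
       \<and> (z i = z j \<longrightarrow>
           expval (phi E z \<theta>) (\<lambda>\<psi> b. 2 * h_op i j \<psi> b)
           = complex_of_real (1 - cos (2*\<theta>) ^ (degree E i + degree E j - 2 - 2*T)))"
proof -
  have "{j, i} \<in> E"
    using assms(2) by (simp add: insert_commute)
  then have degrees: "degree E i = Suc (T + exclusive_degree E i j)"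
    "degree E j = Suc (T + exclusive_degree E j i)"
    using degree_eq_Suc_triangles[OF assms(1)] assms(2,3) triangles_commute by metis+
  show ?thesis
    unfolding expval_phi_two_h_op[OF assms(1,2)] assms(3) degrees
    by (cases "z i"; cases "z j") (simp_all add: field_simps)
qed

end
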